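(* Let the problem data, partition, residuals, augmented Lagrangian and primal updates be as described in the context. Let initial values $X^0_i\in[-u,u]$, $Z^0\in[-u,u]$, $Y^{c,0}_i\in[0,u^c_{Y_i}]$, $\mu^{c,0}_i\in[0,u^c_{\mu_i}]$ be given, and generate the primal sequences by (U1)–(U3) and the dual sequences by the descent rule (D). Then for every $K\in\mathbb N$, $$ L^0\ge L^K+\sum_{i=1}^N\sum_{k=1}^K\sum_{c\in\mathcal C}\sum_j \alpha^{c,k}_{i,j}\,\big|(r^{c,k}_i)_j\big|^2+\sum_{k=0}^{K-1}P^k+\sum_{i=1}^N\sum_{k=0}^{K-1}\sum_{l=1}^M\Big({}^{1}\sigma^k_{i,l}\|X^k_{i,l}-X^{k+1}_{i,l}\|_1+U^k_{i,l}\Big), $$ where $r^{c,k}_i:=r^c_i(X^k_i,Z^k,Y^{c,k}_i)$, $L^k:=\sum_i L_i(X^k_i,Z^k,(Y^{c,k}_i)_c,(\mu^{c,k}_i)_c)$, $$ P^k:=\sum_{i=1}^N\Big[\sum_{l}{}^{2}\sigma^k_{i,l}\|X^{k+1}_{i,l}-X^k_{i,l}\|^2+\rho_i\|X^{k+1}_i-X^k_i\|^2+(\tau^k+\rho_i)\|Z^{k+1}-Z^k\|^2+\sum_{c\in\mathcal C}\Big(\gamma^{c,k}_i+\tfrac{\rho_i}{2}\Big)\|Y^{c,k+1}_i-Y^{c,k}_i\|^2 $$ $$ \qquad+\tfrac{\rho_i}{2}\sum_{l}\Big(\|F_i(X^{k+1,k+1}_{i,l})-F_i(X^{k+1,k}_{i,l})\|^2+\|G_{i,l}(X^{k+1}_{i,l}-X^k_{i,l})\|^2+2\|H_{i,l}(X^{k+1}_{i,l}-X^k_{i,l})\|^2\Big)\Big],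 $$ and $$ U^k_{i,l}:=\Big\langle \mu^{F,k}_i+\rho_i\big(F_i(X^{k+1,k+1}_{i,l})+Y^{F,k}_i\big),\ F_i(X^{k+1,k}_{i,l})-F_i(X^{k+1,k+1}_{i,l})-\big(\nabla_{X_{i,l}}F_i(X^{k+1,k+1}_{i,l})\big)^{\!T}\!\!\cdot(X^k_{i,l}-X^{k+1}_{i,l})\Big\rangle, $$ the last product denoting the vector whose $j$-th entry is $(X^k_{i,l}-X^{k+1}_{i,l})^T\nabla_{X_{i,l}}(F_i)_j(X^{k+1,k+1}_{i,l})$.
   Context: Problem data. $n,N,M\in\mathbb N$. $u\in\mathbb R^n$ with $u>0$. $f(Z)=\langle f_0,Z\rangle$ is linear on $\mathbb R^n$. For each $i=1,\dots,N$: $F_i:\mathbb R^n\to\mathbb R^{p_i}$ has convex quadratic components (each component of the form $a(Z)+c(Z)^2$ or $c(Z)^2-a(Z)b(Z)$ with $a,b,c$ affine, convex on $[-u,u]$); $G_i:\mathbb R^n\to\mathbb R^{q_i}$ and $H_i:\mathbb R^n\to\mathbb R^{s_i}$ are affine. Vectors in $\mathbb R^n$ are partitioned into $M$ disjoint subvectors $Z=(Z_1,\dots,Z_M)$, $Z_l\in\mathbb R^{m_l}$, $\sum_l m_l=n$, the same partition for every $X_i\in\mathbb R^n$; correspondingly $u=(u_1,\dots,u_M)$, $f(Z)=\sum_l\langle f_l,Z_l\rangle$, $G_i(Z)=\sum_l G_{i,l}Z_l+G_{i,0}$, $H_i(Z)=\sum_l H_{i,l}Z_l+H_{i,0}$ with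 matrices $G_{i,l},H_{i,l}$. Slack variables and residuals. Let $\mathcal C=\{pX,nX,F,G,pH,nH\}$. For each $i$ there are slack vectors $Y^{pX}_i,Y^{nX}_i\in\mathbb R^n$, $Y^F_i\in\mathbb R^{p_i}$, $Y^G_i\in\mathbb R^{q_i}$, $Y^{pH}_i,Y^{nH}_i\in\mathbb R^{s_i}$, with given positive upper bound vectors $u^c_{Y_i}$ (slack boxes $[0,u^c_{Y_i}]$), and dual vectors $\mu^c_i$ of the same sizes. Residuals: $r^{pX}_i=X_i-Z+Y^{pX}_i$, $r^{nX}_i=Z-X_i+Y^{nX}_i$, $r^F_i=F_i(X_i)+Y^F_i$, $r^G_i=G_i(X_i)+Y^G_i$, $r^{pH}_i=H_i(X_i)+Y^{pH}_i$, $r^{nH}_i=-H_i(X_i)+Y^{nH}_i$. With $\rho_i>0$, the augmented Lagrangian of block $i$ is $$L_i=f(X_i)+\sum_{c\in\mathcal C}\langle\mu^c_i,r^c_i\rangle+\frac{\rho_i}{2}\sum_{c\in\mathcal C}\|r^c_i\|^2.$$ Gauss–Seidel notation: $X^{k+1,k}_{i,l}:=(X^{k+1}_{i,1},\dots,X^{k+1}_{i,l-1},X^k_{i,l},X^k_{i,l+1},\dots,X^k_{i,M})$ and $X^{k+1,k+1}_{i,l}:=(X^{k+1}_{i,1},\dots,X^{k+1}_{i,l},X^k_{i,l+1},\dots,X^k_{i,M})$. Parameters: ${}^{1}\sigma^k_{i,l}\ge0$, ${}^{2}\sigma^k_{i,l}>0$, $\tau^k>0$, $\gamma^{c,k}_i>0$.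 Updates at iteration $k$ (for each $i$): (U1) For $l=1,\dots,M$ in order, $X^{k+1}_{i,l}$ is the minimizer over $X_{i,l}\in[-u_l,u_l]$ of $L_i\big((X^{k+1}_{i,1},\dots,X^{k+1}_{i,l-1},X_{i,l},X^k_{i,l+1},\dots,X^k_{i,M}),Z^k,(Y^{c,k}_i)_c,(\mu^{c,k}_i)_c\big)+{}^{1}\sigma^k_{i,l}\|X_{i,l}-X^k_{i,l}\|_1+\tfrac{{}^{2}\sigma^k_{i,l}}{2}\|X_{i,l}-X^k_{i,l}\|^2$. (U2) $Z^{k+1}$ is the minimizer over $Z\in[-u,u]$ of $\sum_{i=1}^N\Big(\langle\mu^{pX,k}_i,X^{k+1}_i-Z+Y^{pX,k}_i\rangle+\langle\mu^{nX,k}_i,Z-X^{k+1}_i+Y^{nX,k}_i\rangle+\tfrac{\rho_i}{2}\big(\|X^{k+1}_i-Z+Y^{pX,k}_i\|^2+\|Z-X^{k+1}_i+Y^{nX,k}_i\|^2\big)+\tfrac{\tau^k}{2}\|Z-Z^k\|^2\Big)$. (U3) For each $c\in\mathcal C$, $Y^{c,k+1}_i$ is the minimizer over $Y\in[0,u^c_{Y_i}]$ of $\langle\mu^{c,k}_i,r^c_i(X^{k+1}_i,Z^{k+1},Y)\rangle+\tfrac{\rho_i}{2}\|r^c_i(X^{k+1}_i,Z^{k+1},Y)\|^2+\tfrac{\gamma^{c,k}_i}{2}\|Y-Y^{c,k}_i\|^2$, where $r^c_i(X_i,Z,Y)$ denotes the residual $r^c_i$ with $Y^c_i=Y$. Dual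 descent rule (D): given positive scalars $\alpha^c_i$ and positive dual upper-bound vectors $u^c_{\mu_i}$, set, with $r^{c,k+1}_i:=r^c_i(X^{k+1}_i,Z^{k+1},Y^{c,k+1}_i)$, $\mu^{c,k+1}_i:=\mu^{c,k}_i-\alpha^{c,k+1}_i\,r^{c,k+1}_i$, where $\alpha^{c,k+1}_i$ is the diagonal matrix with entries $\alpha^{c,k+1}_{i,j}=\alpha^c_i$ if $\mu^{c,k}_{i,j}-\alpha^c_i(r^{c,k+1}_i)_j\in[0,(u^c_{\mu_i})_j]$ and $\alpha^{c,k+1}_{i,j}=0$ otherwise. *)

theory Defs
  imports "HOL-Analysis.Analysis"
begin

text \<open>Vectors of R^d are represented as functions nat => real; only the
coordinates j < d matter (all quantities below only look at them).\<close>

type_synonym vec = "nat \<Rightarrow> real"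

datatype cat = CpX | CnX | CF | CG | CpH | CnH

definition cats :: "cat set" where
  "cats = {CpX, CnX, CF, CG, CpH, CnH}"

text \<open>Dimension of the slack / dual vector of class c for a block with
dimensions p, q, s (and ambient dimension n).\<close>
definition cdim :: "nat \<Rightarrow> nat \<Rightarrow> nat \<Rightarrow> nat \<Rightarrow> cat \<Rightarrow> nat" where
  "cdim n p q s c = (case c of CpX \<Rightarrow> n | CnX \<Rightarrow> n | CF \<Rightarrow> p | CG \<Rightarrow> q | CpH \<Rightarrow> s | CnH \<Rightarrow> s)"

definition inner_d :: "nat \<Rightarrow> vec \<Rightarrow> vec \<Rightarrow> real" where
  "inner_d d x y = (\<Sum>j<d. x j * y j)"

definition sqnorm :: "nat \<Rightarrow> vec \<Rightarrow> real" where
  "sqnorm d x = (\<Sum>j<d. (x j)\<^sup>2)"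

definition vdiff :: "vec \<Rightarrow> vec \<Rightarrow> vec" where
  "vdiff x y = (\<lambda>j. x j - y j)"

definition in_box :: "nat \<Rightarrow> vec \<Rightarrow> vec \<Rightarrow> bool" where
  "in_box d u x \<longleftrightarrow> (\<forall>j<d. - u j \<le> x j \<and> x j \<le> u j)"

definition in_pbox :: "nat \<Rightarrow> vec \<Rightarrow> vec \<Rightarrow> bool" where
  "in_pbox d ub x \<longleftrightarrow> (\<forall>j<d. 0 \<le> x j \<and> x j \<le> ub j)"

text \<open>Partition of the coordinates {0..<n} into M blocks: coordinate j belongs to
block blk j. The l-th block is the index set blk_set n blk l.\<close>
definition blk_set :: "nat \<Rightarrow> (nat \<Rightarrow> nat) \<Rightarrow> nat \<Rightarrow> nat set" where
  "blk_set n blk l = {j. j < n \<and> blk j = l}"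

definition in_block_box :: "nat \<Rightarrow> vec \<Rightarrow> (nat \<Rightarrow> nat) \<Rightarrow> nat \<Rightarrow> vec \<Rightarrow> bool" where
  "in_block_box n u blk l x \<longleftrightarrow> (\<forall>j\<in>blk_set n blk l. - u j \<le> x j \<and> x j \<le> u j)"

text \<open>Gauss-Seidel mixed vector: blocks with index < l taken from Xnew, the rest
from Xold.  With 0-based blocks, GS blk Xold Xnew l is X^{k+1,k}_{i,l} and
GS blk Xold Xnew (l+1) is X^{k+1,k+1}_{i,l}.\<close>
definition GS :: "(nat \<Rightarrow> nat) \<Rightarrow> vec \<Rightarrow> vec \<Rightarrow> nat \<Rightarrow> vec" where
  "GS blk Xold Xnew l = (\<lambda>j. if blk j < l then Xnew j else Xold j)"

definition affmap :: "nat \<Rightarrow> (nat \<Rightarrow> nat \<Rightarrow> real) \<Rightarrow> vec \<Rightarrow> vec \<Rightarrow> vec" where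
  "affmap n A b Z = (\<lambda>r. (\<Sum>j<n. A r j * Z j) + b r)"

definition blkmap :: "nat \<Rightarrow> (nat \<Rightarrow> nat) \<Rightarrow> nat \<Rightarrow> (nat \<Rightarrow> nat \<Rightarrow> real) \<Rightarrow> vec \<Rightarrow> vec" where
  "blkmap n blk l A D = (\<lambda>r. \<Sum>j\<in>blk_set n blk l. A r j * D j)"

definition affine_fn :: "nat \<Rightarrow> (vec \<Rightarrow> real) \<Rightarrow> bool" where
  "affine_fn n g \<longleftrightarrow> (\<exists>w w0. \<forall>Z. g Z = (\<Sum>j<n. w j * Z j) + w0)"

definition quad_comp :: "nat \<Rightarrow> (vec \<Rightarrow> real) \<Rightarrow> bool" where
  "quad_comp n g \<longleftrightarrow> (\<exists>a b c. affine_fn n a \<and> affine_fn n b \<and> affine_fn n c \<and>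
      ((\<forall>Z. g Z = a Z + (c Z)\<^sup>2) \<or> (\<forall>Z. g Z = (c Z)\<^sup>2 - a Z * b Z)))"

definition convex_on_box :: "nat \<Rightarrow> vec \<Rightarrow> (vec \<Rightarrow> real) \<Rightarrow> bool" where
  "convex_on_box n u g \<longleftrightarrow> (\<forall>x y t. in_box n u x \<longrightarrow> in_box n u y \<longrightarrow> 0 \<le> t \<longrightarrow> t \<le> 1 \<longrightarrow>
      g (\<lambda>j. t * x j + (1 - t) * y j) \<le> t * g x + (1 - t) * g y)"

definition partial_d :: "(vec \<Rightarrow> real) \<Rightarrow> vec \<Rightarrow> nat \<Rightarrow> real" where
  "partial_d g Z j = deriv (\<lambda>t. g (Z(j := t))) (Z j)"

definition res :: "(vec \<Rightarrow> vec) \<Rightarrow> (vec \<Rightarrow> vec) \<Rightarrow> (vec \<Rightarrow> vec) \<Rightarrow> cat \<Rightarrow> vec \<Rightarrow> vec \<Rightarrow> vec \<Rightarrow> vec" where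
  "res Fi Gi Hi c X Z Y = (case c of
      CpX \<Rightarrow> (\<lambda>j. X j - Z j + Y j)
    | CnX \<Rightarrow> (\<lambda>j. Z j - X j + Y j)
    | CF \<Rightarrow> (\<lambda>j. Fi X j + Y j)
    | CG \<Rightarrow> (\<lambda>j. Gi X j + Y j)
    | CpH \<Rightarrow> (\<lambda>j. Hi X j + Y j)
    | CnH \<Rightarrow> (\<lambda>j. - Hi X j + Y j))"

definition Lag :: "nat \<Rightarrow> nat \<Rightarrow> nat \<Rightarrow> nat \<Rightarrow> vec \<Rightarrow> (vec \<Rightarrow> vec) \<Rightarrow> (vec \<Rightarrow> vec) \<Rightarrow> (vec \<Rightarrow> vec)
    \<Rightarrow> real \<Rightarrow> vec \<Rightarrow> vec \<Rightarrow> (cat \<Rightarrow> vec) \<Rightarrow> (cat \<Rightarrow> vec) \<Rightarrow> real" where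
  "Lag n p q s f0 Fi Gi Hi rho X Z Y mu =
     inner_d n f0 X
     + (\<Sum>c\<in>cats. inner_d (cdim n p q s c) (mu c) (res Fi Gi Hi c X Z (Y c))
         + rho / 2 * sqnorm (cdim n p q s c) (res Fi Gi Hi c X Z (Y c)))"

definition alphaD :: "real \<Rightarrow> real \<Rightarrow> real \<Rightarrow> real \<Rightarrow> real" where
  "alphaD a ub m r = (if 0 \<le> m - a * r \<and> m - a * r \<le> ub then a else 0)"

end

theory Submission
  imports Defs
begin

(* Every primal stage minimises the augmented Lagrangian plus a proximal term over a box.  Comparing
   the minimiser with the points of the segment back to the previous iterate gives a one-sided
   first-order condition: the derivative of L along that segment at the new iterate is at least the
   weight of the proximal terms, which shrink like (1 - t) and (1 - t)^2.  As L is quadratic in every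
   residual, L(old) - L(new) is that derivative plus rho/2 times the squared residual increments; only
   the nonlinear F-residual leaves a linearisation remainder, the term U.  The dual step lowers L by
   exactly the sum of alpha r^2.  Adding up the four stages and telescoping over the iterations gives
   the estimate. *)

lemma segment_min_deriv_lower_bound:
  fixes \<phi> :: "real \<Rightarrow> real"
  assumes deriv: "(\<phi> has_real_derivative a) (at 0)"
    and min: "\<And>t. 0 < t \<Longrightarrow> t \<le> 1 \<Longrightarrow> \<phi> 0 + c1 + c2 \<le> \<phi> t + (1 - t) * c1 + (1 - t)\<^sup>2 * c2"
  shows "c1 + 2 * c2 \<le> a"
proof (rule ccontr)
  define \<psi> where "\<psi> t = \<phi> t + (1 - t) * c1 + (1 - t)\<^sup>2 * c2" for t
  have "(\<psi> has_real_derivative a - c1 - 2 * c2) (at 0)"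
    unfolding \<psi>_def by (rule derivative_eq_intros deriv refl | simp)+
  moreover assume "\<not> c1 + 2 * c2 \<le> a"
  then have "a - c1 - 2 * c2 < 0" by simp
  ultimately obtain \<delta> where "\<delta> > 0" and dec: "\<forall>h>0. h < \<delta> \<longrightarrow> \<psi> (0 + h) < \<psi> 0"
    by (blast dest: DERIV_neg_dec_right)
  define t where "t = min 1 (\<delta> / 2)"
  have "0 < t" "t \<le> 1" "t < \<delta>" using \<open>\<delta> > 0\<close> by (auto simp: t_def)
  then show False using dec[rule_format, of t] min[of t] by (simp add: \<psi>_def)
qed

lemma inner_d_line: "inner_d d w (\<lambda>j. V j + t * D j) = inner_d d w V + t * inner_d d w D"
  unfolding inner_d_def by (simp add: sum_distrib_left sum.distrib algebra_simps)

lemma inner_d_fun_upd: "j < d \<Longrightarrow> inner_d d w (V(j := x)) = inner_d d w V + w j * (x - V j)"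
proof -
  assume "j < d"
  have "inner_d d w (V(j := x)) = (\<Sum>i<d. w i * V i + (if i = j then w j * (x - V j) else 0))"
    unfolding inner_d_def by (rule sum.cong) (auto simp: algebra_simps)
  with \<open>j < d\<close> show ?thesis by (simp add: sum.distrib inner_d_def)
qed

lemma inner_d_cong: "(\<And>j. j < d \<Longrightarrow> y j = y' j) \<Longrightarrow> inner_d d x y = inner_d d x y'"
  unfolding inner_d_def by simp

lemma sqnorm_uminus: "sqnorm d (\<lambda>j. - x j) = sqnorm d x"
  unfolding sqnorm_def by simp

lemma sqnorm_vdiff_commute: "sqnorm d (vdiff x y) = sqnorm d (vdiff y x)"
  unfolding sqnorm_def vdiff_def by (simp add: power2_commute)

lemma sqnorm_scale: "sqnorm d (\<lambda>j. c * x j) = c\<^sup>2 * sqnorm d x"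
  unfolding sqnorm_def by (simp add: sum_distrib_left power_mult_distrib)

definition aug_term :: "nat \<Rightarrow> real \<Rightarrow> vec \<Rightarrow> vec \<Rightarrow> real" where
  "aug_term d rho m R = inner_d d m R + rho / 2 * sqnorm d R"

lemma Lag_aug_term_sum:
  "Lag n p q s f0 Fi Gi Hi rho X Z Y mu
     = inner_d n f0 X + (\<Sum>c\<in>cats. aug_term (cdim n p q s c) rho (mu c) (res Fi Gi Hi c X Z (Y c)))"
  unfolding Lag_def aug_term_def ..

lemma Lag_explicit:
  "Lag n p q s f0 Fi Gi Hi rho X Z Y mu = inner_d n f0 X
    + aug_term n rho (mu CpX) (\<lambda>j. X j - Z j + Y CpX j)
    + aug_term n rho (mu CnX) (\<lambda>j. Z j - X j + Y CnX j)
    + aug_term p rho (mu CF) (\<lambda>j. Fi X j + Y CF j)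
    + aug_term q rho (mu CG) (\<lambda>j. Gi X j + Y CG j)
    + aug_term s rho (mu CpH) (\<lambda>j. Hi X j + Y CpH j)
    + aug_term s rho (mu CnH) (\<lambda>j. - Hi X j + Y CnH j)"
  unfolding Lag_aug_term_sum cats_def by (simp add: cdim_def res_def algebra_simps)

lemma aug_term_cong: "(\<And>j. j < d \<Longrightarrow> R j = R' j) \<Longrightarrow> aug_term d rho m R = aug_term d rho m R'"
  unfolding aug_term_def inner_d_def sqnorm_def by simp

lemma has_real_derivative_aug_term:
  assumes "\<And>j. j < d \<Longrightarrow> ((\<lambda>t. R t j) has_real_derivative R' j) (at 0)"
  shows "((\<lambda>t. aug_term d rho m (R t)) has_real_derivative inner_d d (\<lambda>j. m j + rho * R 0 j) R') (at 0)"
proof -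
  have "((\<lambda>t. \<Sum>j<d. m j * R t j + rho / 2 * (R t j * R t j)) has_real_derivative
          (\<Sum>j<d. m j * R' j + rho / 2 * (R' j * R 0 j + R' j * R 0 j))) (at 0)"
    by (intro DERIV_sum DERIV_add DERIV_cmult DERIV_mult) (auto intro: assms)
  then show ?thesis
    unfolding aug_term_def inner_d_def sqnorm_def
    by (simp add: sum.distrib sum_distrib_left power2_eq_square algebra_simps)
qed

lemma aug_term_diff:
  "aug_term d rho m R1 - aug_term d rho m R0
     = inner_d d (\<lambda>j. m j + rho * R0 j) (\<lambda>j. R1 j - R0 j) + rho / 2 * sqnorm d (\<lambda>j. R1 j - R0 j)"
  unfolding aug_term_def inner_d_def sqnorm_def
  by (simp add: sum_distrib_left sum.distrib[symmetric] sum_subtractf[symmetric] power2_eq_square algebra_simps)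

lemma aug_term_affine_path:
  assumes "\<And>t j. R t j = R 0 j + t * E j"
  shows "((\<lambda>t. aug_term d rho m (R t)) has_real_derivative inner_d d (\<lambda>j. m j + rho * R 0 j) E) (at 0)"
    and "aug_term d rho m (R 1) - aug_term d rho m (R 0)
           = inner_d d (\<lambda>j. m j + rho * R 0 j) E + rho / 2 * sqnorm d E"
proof -
  show "((\<lambda>t. aug_term d rho m (R t)) has_real_derivative inner_d d (\<lambda>j. m j + rho * R 0 j) E) (at 0)"
    by (rule has_real_derivative_aug_term, subst assms) (auto intro!: derivative_eq_intros)
  have "(\<lambda>j. R 1 j - R 0 j) = E" using assms[of 1] by auto
  then show "aug_term d rho m (R 1) - aug_term d rho m (R 0)
           = inner_d d (\<lambda>j. m j + rho * R 0 j) E + rho / 2 * sqnorm d E"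
    by (simp add: aug_term_diff)
qed

lemma quad_comp_weights:
  assumes "quad_comp n g"
  obtains wa wb wc :: vec and a0 b0 c0 :: real
  where "\<And>Z. g Z = (inner_d n wc Z + c0)\<^sup>2 - (inner_d n wa Z + a0) * (inner_d n wb Z + b0)"
proof -
  obtain a b c where "affine_fn n a" "affine_fn n b" "affine_fn n c"
    and form: "(\<forall>Z. g Z = a Z + (c Z)\<^sup>2) \<or> (\<forall>Z. g Z = (c Z)\<^sup>2 - a Z * b Z)"
    using assms unfolding quad_comp_def by blast
  then obtain wa a0 wb b0 wc c0 where
    a: "\<And>Z. a Z = inner_d n wa Z + a0" and b: "\<And>Z. b Z = inner_d n wb Z + b0"
    and c: "\<And>Z. c Z = inner_d n wc Z + c0"
    unfolding affine_fn_def inner_d_def by metis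
  from form show thesis
  proof
    assume "\<forall>Z. g Z = a Z + (c Z)\<^sup>2"
    \<comment> \<open>the first form is the second one with the affine factors \<open>-a\<close> and \<open>1\<close>\<close>
    then have "g Z = (inner_d n wc Z + c0)\<^sup>2 - (inner_d n (\<lambda>j. - wa j) Z + - a0) * (inner_d n (\<lambda>_. 0) Z + 1)" for Z
      by (simp add: a c inner_d_def sum_negf)
    then show thesis by (rule that)
  next
    assume "\<forall>Z. g Z = (c Z)\<^sup>2 - a Z * b Z"
    then show thesis by (intro that) (simp add: a b c)
  qed
qed

lemma quad_comp_cong:
  assumes "quad_comp n g" and "\<And>j. j < n \<Longrightarrow> V j = V' j"
  shows "g V = g V'"
proof -
  obtain wa wb wc a0 b0 c0
    where g: "\<And>Z. g Z = (inner_d n wc Z + c0)\<^sup>2 - (inner_d n wa Z + a0) * (inner_d n wb Z + b0)"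
    using quad_comp_weights[OF assms(1)] by metis
  have "inner_d n w V = inner_d n w V'" for w
    using assms(2) by (rule inner_d_cong)
  then show ?thesis by (simp add: g)
qed

lemma quad_comp_line_deriv:
  assumes "quad_comp n g"
  shows "((\<lambda>t. g (\<lambda>j. V j + t * D j)) has_real_derivative (\<Sum>j<n. D j * partial_d g V j)) (at 0)"
proof -
  obtain wa wb wc a0 b0 c0
    where g: "\<And>Z. g Z = (inner_d n wc Z + c0)\<^sup>2 - (inner_d n wa Z + a0) * (inner_d n wb Z + b0)"
    using quad_comp_weights[OF assms] by metis
  define a b c where "a = inner_d n wa V + a0" and "b = inner_d n wb V + b0" and "c = inner_d n wc V + c0"
  have partial: "partial_d g V j = 2 * c * wc j - (wa j * b + a * wb j)" if "j < n" for j
  proof -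
    have line: "(\<lambda>x. g (V(j := x)))
        = (\<lambda>x. (c + wc j * (x - V j))\<^sup>2 - (a + wa j * (x - V j)) * (b + wb j * (x - V j)))"
      using that by (simp add: g inner_d_fun_upd a_def b_def c_def add_ac)
    have "((\<lambda>x. (c + wc j * (x - V j))\<^sup>2 - (a + wa j * (x - V j)) * (b + wb j * (x - V j)))
            has_real_derivative 2 * c * wc j - (wa j * b + a * wb j)) (at (V j))"
      by (auto intro!: derivative_eq_intros simp: algebra_simps)
    then show ?thesis unfolding partial_d_def line by (rule DERIV_imp_deriv)
  qed
  have line: "(\<lambda>t. g (\<lambda>j. V j + t * D j))
      = (\<lambda>t. (c + t * inner_d n wc D)\<^sup>2 - (a + t * inner_d n wa D) * (b + t * inner_d n wb D))"
    by (simp add: g inner_d_line a_def b_def c_def add_ac)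
  have "((\<lambda>t. (c + t * inner_d n wc D)\<^sup>2 - (a + t * inner_d n wa D) * (b + t * inner_d n wb D))
          has_real_derivative 2 * c * inner_d n wc D - (inner_d n wa D * b + a * inner_d n wb D)) (at 0)"
    by (auto intro!: derivative_eq_intros simp: algebra_simps)
  moreover have "(\<Sum>j<n. D j * partial_d g V j) = 2 * c * inner_d n wc D - (inner_d n wa D * b + a * inner_d n wb D)"
    by (simp add: partial inner_d_def sum_distrib_left sum_distrib_right sum_subtractf sum.distrib algebra_simps)
  ultimately show ?thesis unfolding line by simp
qed

lemma segment_in_interval:
  fixes a b x y t :: real
  assumes "a \<le> x" "x \<le> b" "a \<le> y" "y \<le> b" "0 \<le> t" "t \<le> 1"
  shows "a \<le> (1 - t) * x + t * y \<and> (1 - t) * x + t * y \<le> b"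
proof -
  have "(1 - t) * a + t * a \<le> (1 - t) * x + t * y" "(1 - t) * x + t * y \<le> (1 - t) * b + t * b"
    using assms by (intro add_mono mult_left_mono; simp)+
  then show ?thesis by (simp add: algebra_simps)
qed

lemma in_box_segment:
  "in_box d u x \<Longrightarrow> in_box d u y \<Longrightarrow> 0 \<le> t \<Longrightarrow> t \<le> 1 \<Longrightarrow> in_box d u (\<lambda>j. (1 - t) * x j + t * y j)"
  unfolding in_box_def by (intro allI impI segment_in_interval) auto

lemma in_pbox_segment:
  "in_pbox d ub x \<Longrightarrow> in_pbox d ub y \<Longrightarrow> 0 \<le> t \<Longrightarrow> t \<le> 1 \<Longrightarrow> in_pbox d ub (\<lambda>j. (1 - t) * x j + t * y j)"
  unfolding in_pbox_def by (intro allI impI segment_in_interval) auto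

lemma in_block_box_segment:
  "in_block_box n u blk l x \<Longrightarrow> in_block_box n u blk l y \<Longrightarrow> 0 \<le> t \<Longrightarrow> t \<le> 1
    \<Longrightarrow> in_block_box n u blk l (\<lambda>j. (1 - t) * x j + t * y j)"
  unfolding in_block_box_def by (intro ballI segment_in_interval) auto

lemma in_box_imp_in_block_box: "in_box n u x \<Longrightarrow> in_block_box n u blk l x"
  unfolding in_box_def in_block_box_def blk_set_def by simp

lemma sum_blk_set: "(\<Sum>j<n. if blk j = l then f j else 0) = (\<Sum>j\<in>blk_set n blk l. f j)"
proof -
  have "(\<Sum>j<n. if blk j = l then f j else 0) = sum f {j \<in> {..<n}. blk j = l}"
    by (rule sum.inter_filter[symmetric]) simp
  also have "{j \<in> {..<n}. blk j = l} = blk_set n blk l"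
    by (auto simp: blk_set_def)
  finally show ?thesis .
qed

lemma sum_blk_sets:
  assumes "\<forall>j<n. blk j < M"
  shows "(\<Sum>l<M. \<Sum>j\<in>blk_set n blk l. f j) = (\<Sum>j<n. f j)"
proof -
  have "(\<Sum>l<M. sum f {j \<in> {..<n}. blk j = l}) = sum f {..<n}"
    by (rule sum.group) (use assms in auto)
  moreover have "{j \<in> {..<n}. blk j = l} = blk_set n blk l" for l
    unfolding blk_set_def by auto
  ultimately show ?thesis by simp
qed

lemma blk_restriction_sums:
  fixes blk :: "nat \<Rightarrow> nat" and l :: nat and x y :: vec
  defines "D \<equiv> \<lambda>j. if blk j = l then x j - y j else 0"
  shows "sqnorm n D = (\<Sum>j\<in>blk_set n blk l. (y j - x j)\<^sup>2)"
    and "sqnorm r (\<lambda>k. inner_d n (A k) D) = sqnorm r (blkmap n blk l A (vdiff y x))"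
    and "(\<Sum>j<n. D j * g j) = (\<Sum>j\<in>blk_set n blk l. (x j - y j) * g j)"
proof -
  show "sqnorm n D = (\<Sum>j\<in>blk_set n blk l. (y j - x j)\<^sup>2)"
    unfolding sqnorm_def sum_blk_set[symmetric] by (rule sum.cong) (auto simp: D_def power2_commute)
  have "inner_d n (A k) D = - blkmap n blk l A (vdiff y x) k" for k
    unfolding inner_d_def blkmap_def vdiff_def sum_blk_set[symmetric] sum_negf[symmetric]
    by (rule sum.cong) (auto simp: D_def algebra_simps)
  then show "sqnorm r (\<lambda>k. inner_d n (A k) D) = sqnorm r (blkmap n blk l A (vdiff y x))"
    by (simp add: sqnorm_uminus)
  show "(\<Sum>j<n. D j * g j) = (\<Sum>j\<in>blk_set n blk l. (x j - y j) * g j)"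
    unfolding sum_blk_set[symmetric] by (rule sum.cong) (auto simp: D_def)
qed

lemma affmap_line: "affmap n A b (\<lambda>j. V j + t * D j) r = affmap n A b V r + t * inner_d n (A r) D"
  using inner_d_line[of n "A r" V t D] unfolding affmap_def inner_d_def by simp

lemma Lag_cong_X:
  assumes quad: "\<forall>t<p. quad_comp n (\<lambda>V. Fi V t)" and eq: "\<And>j. j < n \<Longrightarrow> V j = V' j"
  shows "Lag n p q s f0 Fi (affmap n Gm G0) (affmap n Hm H0) rho V Z Y mu
       = Lag n p q s f0 Fi (affmap n Gm G0) (affmap n Hm H0) rho V' Z Y mu"
proof -
  have F: "Fi V t = Fi V' t" if "t < p" for t
    using quad that eq by (auto intro: quad_comp_cong)
  have aff: "affmap n A b V r = affmap n A b V' r" for A b r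
    unfolding affmap_def using eq by simp
  have "inner_d n f0 V = inner_d n f0 V'"
    using eq by (rule inner_d_cong)
  then show ?thesis
    unfolding Lag_explicit
    by (intro arg_cong2[where f = "(+)"] aug_term_cong) (simp_all add: eq F aff)
qed

lemma aug_term_quad_line:
  fixes Fi :: "vec \<Rightarrow> vec" and V D y m :: vec
  assumes quad: "\<forall>k<p. quad_comp n (\<lambda>V. Fi V k)"
  defines "dF \<equiv> \<lambda>k. \<Sum>j<n. D j * partial_d (\<lambda>V. Fi V k) V j"
  shows "((\<lambda>t. aug_term p rho m (\<lambda>k. Fi (\<lambda>j. V j + t * D j) k + y k)) has_real_derivative
           inner_d p (\<lambda>k. m k + rho * (Fi V k + y k)) dF) (at 0)"
    and "aug_term p rho m (\<lambda>k. Fi (\<lambda>j. V j + D j) k + y k) - aug_term p rho m (\<lambda>k. Fi V k + y k)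
           = inner_d p (\<lambda>k. m k + rho * (Fi V k + y k)) dF
           + inner_d p (\<lambda>k. m k + rho * (Fi V k + y k)) (\<lambda>k. Fi (\<lambda>j. V j + D j) k - Fi V k - dF k)
           + rho / 2 * sqnorm p (vdiff (Fi V) (Fi (\<lambda>j. V j + D j)))"
proof -
  have "((\<lambda>t. aug_term p rho m (\<lambda>k. Fi (\<lambda>j. V j + t * D j) k + y k)) has_real_derivative
      inner_d p (\<lambda>k. m k + rho * (Fi (\<lambda>j. V j + 0 * D j) k + y k)) dF) (at 0)"
  proof (rule has_real_derivative_aug_term)
    fix k assume "k < p"
    then show "((\<lambda>t. Fi (\<lambda>j. V j + t * D j) k + y k) has_real_derivative dF k) (at 0)"
      using quad_comp_line_deriv[of n "\<lambda>V. Fi V k" V D] quad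
      unfolding dF_def by (auto intro!: derivative_eq_intros)
  qed
  then show "((\<lambda>t. aug_term p rho m (\<lambda>k. Fi (\<lambda>j. V j + t * D j) k + y k)) has_real_derivative
      inner_d p (\<lambda>k. m k + rho * (Fi V k + y k)) dF) (at 0)"
    by simp
  have step: "(\<lambda>k. (Fi (\<lambda>j. V j + D j) k + y k) - (Fi V k + y k)) = vdiff (Fi (\<lambda>j. V j + D j)) (Fi V)"
    by (simp add: vdiff_def)
  show "aug_term p rho m (\<lambda>k. Fi (\<lambda>j. V j + D j) k + y k) - aug_term p rho m (\<lambda>k. Fi V k + y k)
      = inner_d p (\<lambda>k. m k + rho * (Fi V k + y k)) dF
      + inner_d p (\<lambda>k. m k + rho * (Fi V k + y k)) (\<lambda>k. Fi (\<lambda>j. V j + D j) k - Fi V k - dF k)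
      + rho / 2 * sqnorm p (vdiff (Fi V) (Fi (\<lambda>j. V j + D j)))"
    unfolding aug_term_diff step sqnorm_vdiff_commute[of p "Fi (\<lambda>j. V j + D j)"]
    by (simp add: inner_d_def vdiff_def sum.distrib[symmetric] algebra_simps)
qed

lemma Lag_line_X:
  fixes n p q s :: nat and rho :: real and Fi :: "vec \<Rightarrow> vec" and Gm Hm :: "nat \<Rightarrow> nat \<Rightarrow> real"
    and f0 G0 H0 Z V D :: vec and Y mu :: "cat \<Rightarrow> vec"
  assumes quad: "\<forall>t<p. quad_comp n (\<lambda>V. Fi V t)"
  defines "\<phi> \<equiv> \<lambda>t. Lag n p q s f0 Fi (affmap n Gm G0) (affmap n Hm H0) rho (\<lambda>j. V j + t * D j) Z Y mu"
  obtains a where "(\<phi> has_real_derivative a) (at 0)"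
    and "\<phi> 1 - \<phi> 0 = a
       + inner_d p (\<lambda>t. mu CF t + rho * (Fi V t + Y CF t))
           (\<lambda>t. Fi (\<lambda>j. V j + D j) t - Fi V t - (\<Sum>j<n. D j * partial_d (\<lambda>V. Fi V t) V j))
       + rho / 2 * (2 * sqnorm n D + sqnorm p (vdiff (Fi V) (Fi (\<lambda>j. V j + D j)))
                    + sqnorm q (\<lambda>r. inner_d n (Gm r) D) + 2 * sqnorm s (\<lambda>r. inner_d n (Hm r) D))"
proof -
  define W where "W t = (\<lambda>j. V j + t * D j)" for t
  define GD where "GD r = inner_d n (Gm r) D" for r
  define HD where "HD r = inner_d n (Hm r) D" for r
  define RpX where "RpX t = (\<lambda>j. W t j - Z j + Y CpX j)" for t
  define RnX where "RnX t = (\<lambda>j. Z j - W t j + Y CnX j)" for t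
  define RG where "RG t = (\<lambda>j. affmap n Gm G0 (W t) j + Y CG j)" for t
  define RpH where "RpH t = (\<lambda>j. affmap n Hm H0 (W t) j + Y CpH j)" for t
  define RnH where "RnH t = (\<lambda>j. - affmap n Hm H0 (W t) j + Y CnH j)" for t
  have \<phi>_eq: "\<phi> t = inner_d n f0 (W t)
      + aug_term n rho (mu CpX) (RpX t) + aug_term n rho (mu CnX) (RnX t)
      + aug_term p rho (mu CF) (\<lambda>k. Fi (\<lambda>j. V j + t * D j) k + Y CF k) + aug_term q rho (mu CG) (RG t)
      + aug_term s rho (mu CpH) (RpH t) + aug_term s rho (mu CnH) (RnH t)" for t
    unfolding \<phi>_def Lag_explicit W_def RpX_def RnX_def RG_def RpH_def RnH_def ..
  have f0: "((\<lambda>t. inner_d n f0 (W t)) has_real_derivative inner_d n f0 D) (at 0)"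
    "inner_d n f0 (W 1) - inner_d n f0 (W 0) = inner_d n f0 D"
    unfolding W_def inner_d_line by (auto intro!: derivative_eq_intros)
  note F = aug_term_quad_line[OF quad, where V = V and D = D and rho = rho and m = "mu CF" and y = "Y CF"]
  have "RpX t j = RpX 0 j + t * D j" "RnX t j = RnX 0 j + t * - D j"
    "RG t j = RG 0 j + t * GD j" "RpH t j = RpH 0 j + t * HD j" "RnH t j = RnH 0 j + t * - HD j" for t j
    by (simp_all add: RpX_def RnX_def RG_def RpH_def RnH_def W_def GD_def HD_def affmap_line)
  note pX = aug_term_affine_path[of RpX D n rho "mu CpX", OF this(1)]
    and nX = aug_term_affine_path[of RnX "\<lambda>j. - D j" n rho "mu CnX", OF this(2)]
    and G = aug_term_affine_path[of RG GD q rho "mu CG", OF this(3)]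
    and pH = aug_term_affine_path[of RpH HD s rho "mu CpH", OF this(4)]
    and nH = aug_term_affine_path[of RnH "\<lambda>j. - HD j" s rho "mu CnH", OF this(5)]
  define a where "a = inner_d n f0 D
      + inner_d n (\<lambda>j. mu CpX j + rho * RpX 0 j) D
      + inner_d n (\<lambda>j. mu CnX j + rho * RnX 0 j) (\<lambda>j. - D j)
      + inner_d p (\<lambda>k. mu CF k + rho * (Fi V k + Y CF k)) (\<lambda>k. \<Sum>j<n. D j * partial_d (\<lambda>V. Fi V k) V j)
      + inner_d q (\<lambda>j. mu CG j + rho * RG 0 j) GD
      + inner_d s (\<lambda>j. mu CpH j + rho * RpH 0 j) HD
      + inner_d s (\<lambda>j. mu CnH j + rho * RnH 0 j) (\<lambda>j. - HD j)"
  show thesis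
  proof (rule that)
    show "(\<phi> has_real_derivative a) (at 0)"
      unfolding \<phi>_eq[abs_def] a_def
      by (intro DERIV_add f0(1) pX(1) nX(1) F(1) G(1) pH(1) nH(1))
    have "W 0 = V" "W 1 = (\<lambda>j. V j + D j)"
      by (simp_all add: W_def)
    then show "\<phi> 1 - \<phi> 0 = a
       + inner_d p (\<lambda>t. mu CF t + rho * (Fi V t + Y CF t))
           (\<lambda>t. Fi (\<lambda>j. V j + D j) t - Fi V t - (\<Sum>j<n. D j * partial_d (\<lambda>V. Fi V t) V j))
       + rho / 2 * (2 * sqnorm n D + sqnorm p (vdiff (Fi V) (Fi (\<lambda>j. V j + D j)))
                    + sqnorm q (\<lambda>r. inner_d n (Gm r) D) + 2 * sqnorm s (\<lambda>r. inner_d n (Hm r) D))"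
      using f0(2) pX(2) nX(2) F(2) G(2) pH(2) nH(2) unfolding \<phi>_eq a_def GD_def HD_def
      by (simp add: sqnorm_uminus algebra_simps)
  qed
qed

lemma Lag_block_update_descent:
  fixes n p q s l :: nat and rho sig1 sig2 :: real and blk :: "nat \<Rightarrow> nat" and Fi :: "vec \<Rightarrow> vec"
    and Gm Hm :: "nat \<Rightarrow> nat \<Rightarrow> real" and f0 G0 H0 Z u X0 X1 :: vec and Y mu :: "cat \<Rightarrow> vec"
  defines "Lg \<equiv> \<lambda>V. Lag n p q s f0 Fi (affmap n Gm G0) (affmap n Hm H0) rho V Z Y mu"
    and "Vo \<equiv> GS blk X0 X1 l" and "Vs \<equiv> GS blk X0 X1 (Suc l)"
  assumes quad: "\<forall>t<p. quad_comp n (\<lambda>V. Fi V t)"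
    and box0: "in_block_box n u blk l X0" and box1: "in_block_box n u blk l X1"
    and minim: "\<forall>W. in_block_box n u blk l W \<longrightarrow>
        (let obj = (\<lambda>V. Lag n p q s f0 Fi (affmap n Gm G0) (affmap n Hm H0) rho V Z Y mu
                 + sig1 * (\<Sum>j\<in>blk_set n blk l. \<bar>V j - X0 j\<bar>)
                 + sig2 / 2 * (\<Sum>j\<in>blk_set n blk l. (V j - X0 j)\<^sup>2))
         in obj Vs \<le> obj (\<lambda>j. if blk j = l then W j else Vo j))"
  shows "Lg Vo - Lg Vs \<ge>
     sig1 * (\<Sum>j\<in>blk_set n blk l. \<bar>X0 j - X1 j\<bar>) + sig2 * (\<Sum>j\<in>blk_set n blk l. (X1 j - X0 j)\<^sup>2)
     + rho * (\<Sum>j\<in>blk_set n blk l. (X1 j - X0 j)\<^sup>2)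
     + inner_d p (\<lambda>t. mu CF t + rho * (Fi Vs t + Y CF t))
         (\<lambda>t. Fi Vo t - Fi Vs t - (\<Sum>j\<in>blk_set n blk l. (X0 j - X1 j) * partial_d (\<lambda>V. Fi V t) Vs j))
     + rho / 2 * (sqnorm p (vdiff (Fi Vs) (Fi Vo)) + sqnorm q (blkmap n blk l Gm (vdiff X1 X0))
                  + 2 * sqnorm s (blkmap n blk l Hm (vdiff X1 X0)))"
proof -
  define D where "D = (\<lambda>j. if blk j = l then X0 j - X1 j else 0)"
  define S1 where "S1 = (\<Sum>j\<in>blk_set n blk l. \<bar>X0 j - X1 j\<bar>)"
  define S2 where "S2 = (\<Sum>j\<in>blk_set n blk l. (X1 j - X0 j)\<^sup>2)"
  obtain a where deriv: "((\<lambda>t. Lg (\<lambda>j. Vs j + t * D j)) has_real_derivative a) (at 0)"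
    and expand: "Lg (\<lambda>j. Vs j + 1 * D j) - Lg (\<lambda>j. Vs j + 0 * D j) = a
       + inner_d p (\<lambda>t. mu CF t + rho * (Fi Vs t + Y CF t))
           (\<lambda>t. Fi (\<lambda>j. Vs j + D j) t - Fi Vs t - (\<Sum>j<n. D j * partial_d (\<lambda>V. Fi V t) Vs j))
       + rho / 2 * (2 * sqnorm n D + sqnorm p (vdiff (Fi Vs) (Fi (\<lambda>j. Vs j + D j)))
                    + sqnorm q (\<lambda>r. inner_d n (Gm r) D) + 2 * sqnorm s (\<lambda>r. inner_d n (Hm r) D))"
    using Lag_line_X[OF quad] unfolding Lg_def by blast
  have Vo_eq: "(\<lambda>j. Vs j + 1 * D j) = Vo" "(\<lambda>j. Vs j + D j) = Vo" "(\<lambda>j. Vs j + 0 * D j) = Vs"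
    by (auto simp: Vs_def Vo_def GS_def D_def)
  have on_block: "Vs j + t * D j - X0 j = (1 - t) * (X1 j - X0 j)" if "j \<in> blk_set n blk l" for t j
    using that by (simp add: Vs_def GS_def D_def blk_set_def algebra_simps)
  have prox: "(\<Sum>j\<in>blk_set n blk l. \<bar>Vs j + t * D j - X0 j\<bar>) = (1 - t) * S1"
    "(\<Sum>j\<in>blk_set n blk l. (Vs j + t * D j - X0 j)\<^sup>2) = (1 - t)\<^sup>2 * S2" if "t \<le> 1" for t
    using that by (simp_all add: on_block S1_def S2_def abs_mult power_mult_distrib sum_distrib_left
        abs_minus_commute)
  have "sig1 * S1 + 2 * (sig2 / 2 * S2) \<le> a"
  proof (rule segment_min_deriv_lower_bound[OF deriv])
    fix t :: real assume "0 < t" "t \<le> 1"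
    then have seg: "in_block_box n u blk l (\<lambda>j. (1 - t) * X1 j + t * X0 j)"
      by (simp add: in_block_box_segment box0 box1)
    have path: "(\<lambda>j. if blk j = l then (1 - t) * X1 j + t * X0 j else Vo j) = (\<lambda>j. Vs j + t * D j)"
      by (auto simp: Vs_def Vo_def GS_def D_def algebra_simps)
    have "Lg Vs + sig1 * (\<Sum>j\<in>blk_set n blk l. \<bar>Vs j + 0 * D j - X0 j\<bar>)
        + sig2 / 2 * (\<Sum>j\<in>blk_set n blk l. (Vs j + 0 * D j - X0 j)\<^sup>2)
      \<le> Lg (\<lambda>j. Vs j + t * D j) + sig1 * (\<Sum>j\<in>blk_set n blk l. \<bar>Vs j + t * D j - X0 j\<bar>)
        + sig2 / 2 * (\<Sum>j\<in>blk_set n blk l. (Vs j + t * D j - X0 j)\<^sup>2)"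
      using minim[rule_format, OF seg] unfolding path unfolding Let_def Lg_def by simp
    then show "Lg (\<lambda>j. Vs j + 0 * D j) + sig1 * S1 + sig2 / 2 * S2
        \<le> Lg (\<lambda>j. Vs j + t * D j) + (1 - t) * (sig1 * S1) + (1 - t)\<^sup>2 * (sig2 / 2 * S2)"
      using \<open>t \<le> 1\<close> prox[of 0] prox[of t] by (simp add: algebra_simps)
  qed
  then show ?thesis
    using expand[unfolded Vo_eq] unfolding S1_def S2_def
    by (simp only: D_def blk_restriction_sums[where blk = blk and l = l and x = X0 and y = X1])
      (simp add: algebra_simps)
qed

lemma Lag_sweep_descent:
  fixes n p q s M :: nat and rho :: real and blk :: "nat \<Rightarrow> nat" and Fi :: "vec \<Rightarrow> vec"
    and Gm Hm :: "nat \<Rightarrow> nat \<Rightarrow> real" and f0 G0 H0 Z u X0 X1 :: vec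
    and Y mu :: "cat \<Rightarrow> vec" and sig1 sig2 :: "nat \<Rightarrow> real"
  defines "Lg \<equiv> \<lambda>V. Lag n p q s f0 Fi (affmap n Gm G0) (affmap n Hm H0) rho V Z Y mu"
  assumes quad: "\<forall>t<p. quad_comp n (\<lambda>V. Fi V t)"
    and blk_part: "\<forall>j<n. blk j < M"
    and box0: "\<forall>l<M. in_block_box n u blk l X0"
    and update: "\<forall>l<M. in_block_box n u blk l X1 \<and>
       (\<forall>W. in_block_box n u blk l W \<longrightarrow>
        (let obj = (\<lambda>V. Lag n p q s f0 Fi (affmap n Gm G0) (affmap n Hm H0) rho V Z Y mu
                 + sig1 l * (\<Sum>j\<in>blk_set n blk l. \<bar>V j - X0 j\<bar>)
                 + sig2 l / 2 * (\<Sum>j\<in>blk_set n blk l. (V j - X0 j)\<^sup>2))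
         in obj (GS blk X0 X1 (Suc l)) \<le> obj (\<lambda>j. if blk j = l then W j else GS blk X0 X1 l j)))"
  shows "Lg X1
     + (\<Sum>l<M. sig1 l * (\<Sum>j\<in>blk_set n blk l. \<bar>X0 j - X1 j\<bar>)
        + inner_d p (\<lambda>t. mu CF t + rho * (Fi (GS blk X0 X1 (Suc l)) t + Y CF t))
         (\<lambda>t. Fi (GS blk X0 X1 l) t - Fi (GS blk X0 X1 (Suc l)) t
             - (\<Sum>j\<in>blk_set n blk l. (X0 j - X1 j) * partial_d (\<lambda>V. Fi V t) (GS blk X0 X1 (Suc l)) j)))
     + ((\<Sum>l<M. sig2 l * (\<Sum>j\<in>blk_set n blk l. (X1 j - X0 j)\<^sup>2))
        + rho * sqnorm n (vdiff X1 X0)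
        + rho / 2 * (\<Sum>l<M. sqnorm p (vdiff (Fi (GS blk X0 X1 (Suc l))) (Fi (GS blk X0 X1 l)))
                + sqnorm q (blkmap n blk l Gm (vdiff X1 X0))
                + 2 * sqnorm s (blkmap n blk l Hm (vdiff X1 X0))))
     \<le> Lg X0"
    (is "Lg X1 + (\<Sum>l<M. ?lin l) + ((\<Sum>l<M. ?prox l) + rho * _ + rho / 2 * (\<Sum>l<M. ?quad l)) \<le> _")
proof -
  define S2 where "S2 l = (\<Sum>j\<in>blk_set n blk l. (X1 j - X0 j)\<^sup>2)" for l
  have block: "Lg (GS blk X0 X1 l) - Lg (GS blk X0 X1 (Suc l)) \<ge> ?lin l + ?prox l + rho * S2 l + rho / 2 * ?quad l"
    if "l < M" for l
    using Lag_block_update_descent[OF quad, of u blk l X0 X1] box0 update that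
    unfolding Lg_def S2_def by (simp add: algebra_simps)
  have "Lg (GS blk X0 X1 M) = Lg X1"
    unfolding Lg_def by (rule Lag_cong_X[OF quad]) (use blk_part in \<open>simp add: GS_def\<close>)
  then have "Lg X0 - Lg X1 = (\<Sum>l<M. Lg (GS blk X0 X1 l) - Lg (GS blk X0 X1 (Suc l)))"
    using sum_lessThan_telescope'[of "\<lambda>l. Lg (GS blk X0 X1 l)" M] by (simp add: GS_def[of _ _ _ 0])
  also have "\<dots> \<ge> (\<Sum>l<M. ?lin l + ?prox l + rho * S2 l + rho / 2 * ?quad l)"
    by (intro sum_mono block) simp
  moreover have "(\<Sum>l<M. S2 l) = sqnorm n (vdiff X1 X0)"
    unfolding S2_def sum_blk_sets[OF blk_part] sqnorm_def vdiff_def ..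
  then have "(\<Sum>l<M. ?lin l + ?prox l + rho * S2 l + rho / 2 * ?quad l)
      = (\<Sum>l<M. ?lin l) + (\<Sum>l<M. ?prox l) + rho * sqnorm n (vdiff X1 X0) + rho / 2 * (\<Sum>l<M. ?quad l)"
    by (simp only: sum.distrib sum_distrib_left[symmetric])
  ultimately show ?thesis by linarith
qed

lemma Lag_line_Z:
  obtains a where "((\<lambda>t. Lag n p q s f0 Fi Gi Hi rho X (\<lambda>j. Z j + t * E j) Y mu) has_real_derivative a) (at 0)"
    and "Lag n p q s f0 Fi Gi Hi rho X (\<lambda>j. Z j + E j) Y mu - Lag n p q s f0 Fi Gi Hi rho X Z Y mu
           = a + rho * sqnorm n E"
proof -
  define RpX where "RpX t = (\<lambda>j. X j - (Z j + t * E j) + Y CpX j)" for t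
  define RnX where "RnX t = (\<lambda>j. Z j + t * E j - X j + Y CnX j)" for t
  have "RpX t j = RpX 0 j + t * - E j" "RnX t j = RnX 0 j + t * E j" for t j
    by (simp_all add: RpX_def RnX_def)
  note pX = aug_term_affine_path[of RpX, OF this(1)] and nX = aug_term_affine_path[of RnX, OF this(2)]
  let ?rest = "inner_d n f0 X + aug_term p rho (mu CF) (\<lambda>j. Fi X j + Y CF j)
    + aug_term q rho (mu CG) (\<lambda>j. Gi X j + Y CG j) + aug_term s rho (mu CpH) (\<lambda>j. Hi X j + Y CpH j)
    + aug_term s rho (mu CnH) (\<lambda>j. - Hi X j + Y CnH j)"
  have Lag_eq: "Lag n p q s f0 Fi Gi Hi rho X (\<lambda>j. Z j + t * E j) Y mu
      = ?rest + aug_term n rho (mu CpX) (RpX t) + aug_term n rho (mu CnX) (RnX t)" for t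
    unfolding Lag_explicit RpX_def RnX_def by simp
  show thesis
  proof (rule that)
    show "((\<lambda>t. Lag n p q s f0 Fi Gi Hi rho X (\<lambda>j. Z j + t * E j) Y mu) has_real_derivative
        inner_d n (\<lambda>j. mu CpX j + rho * RpX 0 j) (\<lambda>j. - E j) + inner_d n (\<lambda>j. mu CnX j + rho * RnX 0 j) E) (at 0)"
      unfolding Lag_eq using DERIV_add[OF DERIV_add[OF DERIV_const pX(1)] nX(1)] by simp
    show "Lag n p q s f0 Fi Gi Hi rho X (\<lambda>j. Z j + E j) Y mu - Lag n p q s f0 Fi Gi Hi rho X Z Y mu
        = inner_d n (\<lambda>j. mu CpX j + rho * RpX 0 j) (\<lambda>j. - E j) + inner_d n (\<lambda>j. mu CnX j + rho * RnX 0 j) E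
          + rho * sqnorm n E"
      using Lag_eq[of 1] Lag_eq[of 0] pX(2) nX(2) by (simp add: sqnorm_uminus algebra_simps)
  qed
qed

lemma Lag_sum_line_Z:
  fixes N n :: nat and p q s :: "nat \<Rightarrow> nat" and rho :: "nat \<Rightarrow> real" and F G H :: "nat \<Rightarrow> vec \<Rightarrow> vec"
    and X :: "nat \<Rightarrow> vec" and Y mu :: "nat \<Rightarrow> cat \<Rightarrow> vec" and f0 Z E :: vec
  defines "Lg \<equiv> \<lambda>i V. Lag n (p i) (q i) (s i) f0 (F i) (G i) (H i) (rho i) (X i) V (Y i) (mu i)"
  obtains a where "((\<lambda>t. \<Sum>i<N. Lg i (\<lambda>j. Z j + t * E j)) has_real_derivative a) (at 0)"
    and "(\<Sum>i<N. Lg i (\<lambda>j. Z j + E j)) - (\<Sum>i<N. Lg i Z) = a + (\<Sum>i<N. rho i) * sqnorm n E"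
proof -
  have "\<forall>i. \<exists>a. ((\<lambda>t. Lg i (\<lambda>j. Z j + t * E j)) has_real_derivative a) (at 0)
      \<and> Lg i (\<lambda>j. Z j + E j) - Lg i Z = a + rho i * sqnorm n E"
  proof
    fix i
    obtain a where "((\<lambda>t. Lg i (\<lambda>j. Z j + t * E j)) has_real_derivative a) (at 0)"
      and "Lg i (\<lambda>j. Z j + E j) - Lg i Z = a + rho i * sqnorm n E"
      unfolding Lg_def by (rule Lag_line_Z)
    then show "\<exists>a. ((\<lambda>t. Lg i (\<lambda>j. Z j + t * E j)) has_real_derivative a) (at 0)
      \<and> Lg i (\<lambda>j. Z j + E j) - Lg i Z = a + rho i * sqnorm n E" by blast
  qed
  then obtain a where a: "\<forall>i. ((\<lambda>t. Lg i (\<lambda>j. Z j + t * E j)) has_real_derivative a i) (at 0)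
      \<and> Lg i (\<lambda>j. Z j + E j) - Lg i Z = a i + rho i * sqnorm n E"
    by (rule choice[THEN exE])
  show thesis
  proof (rule that)
    show "((\<lambda>t. \<Sum>i<N. Lg i (\<lambda>j. Z j + t * E j)) has_real_derivative (\<Sum>i<N. a i)) (at 0)"
      using a by (intro DERIV_sum) blast
    show "(\<Sum>i<N. Lg i (\<lambda>j. Z j + E j)) - (\<Sum>i<N. Lg i Z) = (\<Sum>i<N. a i) + (\<Sum>i<N. rho i) * sqnorm n E"
      using a unfolding sum_subtractf[symmetric] by (simp add: sum.distrib sum_distrib_right)
  qed
qed

lemma Lag_diff_Z:
  "Lag n p q s f0 Fi Gi Hi rho X V Y mu - Lag n p q s f0 Fi Gi Hi rho X V' Y mu
    = (inner_d n (mu CpX) (res Fi Gi Hi CpX X V (Y CpX)) + inner_d n (mu CnX) (res Fi Gi Hi CnX X V (Y CnX))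
       + rho / 2 * (sqnorm n (res Fi Gi Hi CpX X V (Y CpX)) + sqnorm n (res Fi Gi Hi CnX X V (Y CnX))))
    - (inner_d n (mu CpX) (res Fi Gi Hi CpX X V' (Y CpX)) + inner_d n (mu CnX) (res Fi Gi Hi CnX X V' (Y CnX))
       + rho / 2 * (sqnorm n (res Fi Gi Hi CpX X V' (Y CpX)) + sqnorm n (res Fi Gi Hi CnX X V' (Y CnX))))"
  unfolding Lag_def cats_def by (simp add: cdim_def res_def algebra_simps)

lemma Lag_Z_update_descent:
  fixes N n :: nat and p q s :: "nat \<Rightarrow> nat" and rho :: "nat \<Rightarrow> real" and tau :: real
    and F G H :: "nat \<Rightarrow> vec \<Rightarrow> vec" and X :: "nat \<Rightarrow> vec" and Y mu :: "nat \<Rightarrow> cat \<Rightarrow> vec"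
    and f0 u Z0 Z1 :: vec
  defines "Lg \<equiv> \<lambda>i V. Lag n (p i) (q i) (s i) f0 (F i) (G i) (H i) (rho i) (X i) V (Y i) (mu i)"
  assumes box0: "in_box n u Z0" and box1: "in_box n u Z1"
    and minim: "\<forall>W. in_box n u W \<longrightarrow>
          (let obj = (\<lambda>V. \<Sum>i<N.
                 inner_d n (mu i CpX) (res (F i) (G i) (H i) CpX (X i) V (Y i CpX))
               + inner_d n (mu i CnX) (res (F i) (G i) (H i) CnX (X i) V (Y i CnX))
               + rho i / 2 * (sqnorm n (res (F i) (G i) (H i) CpX (X i) V (Y i CpX))
                              + sqnorm n (res (F i) (G i) (H i) CnX (X i) V (Y i CnX)))
               + tau / 2 * sqnorm n (vdiff V Z0))
           in obj Z1 \<le> obj W)"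
  shows "(\<Sum>i<N. Lg i Z1) + (\<Sum>i<N. (tau + rho i) * sqnorm n (vdiff Z1 Z0)) \<le> (\<Sum>i<N. Lg i Z0)"
proof -
  define E where "E = vdiff Z0 Z1"
  define S where "S = sqnorm n (vdiff Z1 Z0)"
  have Z0_eq: "(\<lambda>j. Z1 j + E j) = Z0" and Z1_eq: "(\<lambda>j. Z1 j + 0 * E j) = Z1"
    by (auto simp: E_def vdiff_def)
  have "sqnorm n E = S"
    unfolding E_def S_def by (rule sqnorm_vdiff_commute)
  obtain a where deriv: "((\<lambda>t. \<Sum>i<N. Lg i (\<lambda>j. Z1 j + t * E j)) has_real_derivative a) (at 0)"
    and expand: "(\<Sum>i<N. Lg i (\<lambda>j. Z1 j + E j)) - (\<Sum>i<N. Lg i Z1) = a + (\<Sum>i<N. rho i) * sqnorm n E"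
    unfolding Lg_def by (rule Lag_sum_line_Z)
  define zpart where "zpart i V = inner_d n (mu i CpX) (res (F i) (G i) (H i) CpX (X i) V (Y i CpX))
      + inner_d n (mu i CnX) (res (F i) (G i) (H i) CnX (X i) V (Y i CnX))
      + rho i / 2 * (sqnorm n (res (F i) (G i) (H i) CpX (X i) V (Y i CpX))
                     + sqnorm n (res (F i) (G i) (H i) CnX (X i) V (Y i CnX)))" for i V
  have "0 + 2 * (\<Sum>i<N. tau / 2 * S) \<le> a"
  proof (rule segment_min_deriv_lower_bound[OF deriv])
    fix t :: real assume "0 < t" "t \<le> 1"
    then have "in_box n u (\<lambda>j. (1 - t) * Z1 j + t * Z0 j)"
      by (simp add: in_box_segment box0 box1)
    moreover have "(\<lambda>j. (1 - t) * Z1 j + t * Z0 j) = (\<lambda>j. Z1 j + t * E j)"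
      by (auto simp: E_def vdiff_def algebra_simps)
    moreover have "sqnorm n (vdiff (\<lambda>j. Z1 j + t * E j) Z0) = (1 - t)\<^sup>2 * S"
      unfolding S_def sqnorm_scale[symmetric] by (simp add: E_def vdiff_def algebra_simps)
    ultimately have "(\<Sum>i<N. zpart i Z1) + (\<Sum>i<N. tau / 2 * S)
        \<le> (\<Sum>i<N. zpart i (\<lambda>j. Z1 j + t * E j)) + (\<Sum>i<N. tau / 2 * ((1 - t)\<^sup>2 * S))"
      using minim unfolding Let_def zpart_def S_def sum.distrib[symmetric] by auto
    moreover have "(\<Sum>i<N. Lg i (\<lambda>j. Z1 j + t * E j)) - (\<Sum>i<N. Lg i Z1)
        = (\<Sum>i<N. zpart i (\<lambda>j. Z1 j + t * E j)) - (\<Sum>i<N. zpart i Z1)"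
      unfolding sum_subtractf[symmetric] Lg_def zpart_def Lag_diff_Z ..
    moreover have "(1 - t)\<^sup>2 * (\<Sum>i<N. tau / 2 * S) = (\<Sum>i<N. tau / 2 * ((1 - t)\<^sup>2 * S))"
      by (simp add: sum_distrib_left algebra_simps)
    ultimately show "(\<Sum>i<N. Lg i (\<lambda>j. Z1 j + 0 * E j)) + 0 + (\<Sum>i<N. tau / 2 * S)
        \<le> (\<Sum>i<N. Lg i (\<lambda>j. Z1 j + t * E j)) + (1 - t) * 0 + (1 - t)\<^sup>2 * (\<Sum>i<N. tau / 2 * S)"
      unfolding Z1_eq by linarith
  qed
  moreover have "(\<Sum>i<N. (tau + rho i) * S) = 2 * (\<Sum>i<N. tau / 2 * S) + (\<Sum>i<N. rho i) * S"
    by (simp add: sum.distrib sum_distrib_left[symmetric] sum_distrib_right algebra_simps)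
  ultimately show ?thesis
    using expand unfolding Z0_eq \<open>sqnorm n E = S\<close> S_def[symmetric] by linarith
qed

lemma res_line_Y: "res Fi Gi Hi c X Z (\<lambda>j. V j + t * E j) = (\<lambda>j. res Fi Gi Hi c X Z V j + t * E j)"
  by (cases c) (simp_all add: res_def algebra_simps)

lemma res_prox_descent:
  fixes Y0 Y1 ub m :: vec and gam rho :: real
  assumes box0: "in_pbox d ub Y0" and box1: "in_pbox d ub Y1"
    and minim: "\<forall>W. in_pbox d ub W \<longrightarrow>
          (let obj = (\<lambda>V. inner_d d m (res Fi Gi Hi c X Z V) + rho / 2 * sqnorm d (res Fi Gi Hi c X Z V)
                          + gam / 2 * sqnorm d (vdiff V Y0))
           in obj Y1 \<le> obj W)"
  shows "aug_term d rho m (res Fi Gi Hi c X Z Y1) + (gam + rho / 2) * sqnorm d (vdiff Y1 Y0)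
      \<le> aug_term d rho m (res Fi Gi Hi c X Z Y0)"
proof -
  define E where "E = vdiff Y0 Y1"
  define S where "S = sqnorm d (vdiff Y1 Y0)"
  define R where "R t = res Fi Gi Hi c X Z (\<lambda>j. Y1 j + t * E j)" for t
  have "R t j = R 0 j + t * E j" for t j
    by (simp add: R_def res_line_Y)
  note path = aug_term_affine_path[of R E, OF this]
  have R0: "R 0 = res Fi Gi Hi c X Z Y1" and R1: "R 1 = res Fi Gi Hi c X Z Y0"
    by (simp_all add: R_def E_def vdiff_def)
  have "0 + 2 * (gam / 2 * S) \<le> inner_d d (\<lambda>j. m j + rho * R 0 j) E"
  proof (rule segment_min_deriv_lower_bound[OF path(1)])
    fix t :: real assume "0 < t" "t \<le> 1"
    then have "in_pbox d ub (\<lambda>j. (1 - t) * Y1 j + t * Y0 j)"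
      by (simp add: in_pbox_segment box0 box1)
    moreover have "(\<lambda>j. (1 - t) * Y1 j + t * Y0 j) = (\<lambda>j. Y1 j + t * E j)"
      by (auto simp: E_def vdiff_def algebra_simps)
    ultimately have "aug_term d rho m (R 0) + gam / 2 * S
        \<le> aug_term d rho m (R t) + gam / 2 * sqnorm d (vdiff (\<lambda>j. Y1 j + t * E j) Y0)"
      using minim unfolding R0 R_def S_def Let_def aug_term_def by simp
    moreover have "sqnorm d (vdiff (\<lambda>j. Y1 j + t * E j) Y0) = (1 - t)\<^sup>2 * S"
      unfolding S_def sqnorm_scale[symmetric] by (simp add: E_def vdiff_def algebra_simps)
    ultimately show "aug_term d rho m (R 0) + 0 + gam / 2 * S
        \<le> aug_term d rho m (R t) + (1 - t) * 0 + (1 - t)\<^sup>2 * (gam / 2 * S)"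
      by (simp add: algebra_simps)
  qed
  moreover have "sqnorm d E = S"
    unfolding E_def S_def by (rule sqnorm_vdiff_commute)
  ultimately show ?thesis
    using path(2) unfolding R0 R1 S_def[symmetric] by (simp add: algebra_simps)
qed

lemma Lag_Y_update_descent:
  fixes Y0 Y1 uY :: "cat \<Rightarrow> vec" and gam :: "cat \<Rightarrow> real"
  assumes box0: "\<forall>c\<in>cats. in_pbox (cdim n p q s c) (uY c) (Y0 c)"
    and box1: "\<forall>c\<in>cats. in_pbox (cdim n p q s c) (uY c) (Y1 c)"
    and minim: "\<forall>c\<in>cats. \<forall>W. in_pbox (cdim n p q s c) (uY c) W \<longrightarrow>
          (let obj = (\<lambda>V.
                 inner_d (cdim n p q s c) (mu c) (res Fi Gi Hi c X Z V)
               + rho / 2 * sqnorm (cdim n p q s c) (res Fi Gi Hi c X Z V)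
               + gam c / 2 * sqnorm (cdim n p q s c) (vdiff V (Y0 c)))
           in obj (Y1 c) \<le> obj W)"
  shows "Lag n p q s f0 Fi Gi Hi rho X Z Y1 mu
       + (\<Sum>c\<in>cats. (gam c + rho / 2) * sqnorm (cdim n p q s c) (vdiff (Y1 c) (Y0 c)))
     \<le> Lag n p q s f0 Fi Gi Hi rho X Z Y0 mu"
proof -
  have "(\<Sum>c\<in>cats. aug_term (cdim n p q s c) rho (mu c) (res Fi Gi Hi c X Z (Y1 c))
       + (gam c + rho / 2) * sqnorm (cdim n p q s c) (vdiff (Y1 c) (Y0 c)))
      \<le> (\<Sum>c\<in>cats. aug_term (cdim n p q s c) rho (mu c) (res Fi Gi Hi c X Z (Y0 c)))"
    using box0 box1 minim by (intro sum_mono res_prox_descent[where ub = "uY _"]) auto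
  then show ?thesis
    unfolding Lag_aug_term_sum by (simp add: sum.distrib)
qed

lemma Lag_dual_update:
  assumes "\<forall>c\<in>cats. \<forall>j<cdim n p q s c. mu1 c j = mu0 c j - al c j * res Fi Gi Hi c X Z (Y c) j"
  shows "Lag n p q s f0 Fi Gi Hi rho X Z Y mu0 = Lag n p q s f0 Fi Gi Hi rho X Z Y mu1
     + (\<Sum>c\<in>cats. \<Sum>j<cdim n p q s c. al c j * \<bar>res Fi Gi Hi c X Z (Y c) j\<bar>\<^sup>2)"
proof -
  have "inner_d (cdim n p q s c) (mu0 c) (res Fi Gi Hi c X Z (Y c))
      = inner_d (cdim n p q s c) (mu1 c) (res Fi Gi Hi c X Z (Y c))
        + (\<Sum>j<cdim n p q s c. al c j * \<bar>res Fi Gi Hi c X Z (Y c) j\<bar>\<^sup>2)" if "c \<in> cats" for c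
    unfolding inner_d_def sum.distrib[symmetric]
    by (intro sum.cong refl) (simp add: assms that power2_eq_square algebra_simps)
  then show ?thesis
    unfolding Lag_aug_term_sum aug_term_def by (simp add: sum.distrib algebra_simps cong: sum.cong)
qed

(* \<Lambda> k i is L_i at iteration k; \<Lambda>x, \<Lambda>z, \<Lambda>y are its values after the X-, Z- and Y-updates of
   that iteration. *)
lemma staged_descent_telescope:
  fixes \<Lambda> \<Lambda>x \<Lambda>z \<Lambda>y A C B\<sigma> B\<rho> BZ BY BF :: "nat \<Rightarrow> nat \<Rightarrow> real"
  assumes X_stage: "\<And>k i. i < N \<Longrightarrow> \<Lambda>x k i + C k i + (B\<sigma> k i + B\<rho> k i + BF k i) \<le> \<Lambda> k i"
    and Z_stage: "\<And>k. (\<Sum>i<N. \<Lambda>z k i) + (\<Sum>i<N. BZ k i) \<le> (\<Sum>i<N. \<Lambda>x k i)"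
    and Y_stage: "\<And>k i. i < N \<Longrightarrow> \<Lambda>y k i + BY k i \<le> \<Lambda>z k i"
    and dual_stage: "\<And>k i. i < N \<Longrightarrow> \<Lambda>y k i = \<Lambda> (Suc k) i + A (Suc k) i"
  shows "(\<Sum>i<N. \<Lambda> 0 i) \<ge> (\<Sum>i<N. \<Lambda> K i) + (\<Sum>i<N. \<Sum>k\<in>{1..K}. A k i)
      + (\<Sum>k<K. \<Sum>i<N. B\<sigma> k i + B\<rho> k i + BZ k i + BY k i + BF k i) + (\<Sum>i<N. \<Sum>k<K. C k i)"
proof -
  define B where "B k = (\<Sum>i<N. B\<sigma> k i + B\<rho> k i + BZ k i + BY k i + BF k i)" for k
  have step: "(\<Sum>i<N. \<Lambda> (Suc k) i) + (\<Sum>i<N. A (Suc k) i) + B k + (\<Sum>i<N. C k i) \<le> (\<Sum>i<N. \<Lambda> k i)" for k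
  proof -
    have "(\<Sum>i<N. \<Lambda>x k i + C k i + (B\<sigma> k i + B\<rho> k i + BF k i)) \<le> (\<Sum>i<N. \<Lambda> k i)"
      "(\<Sum>i<N. \<Lambda>y k i + BY k i) \<le> (\<Sum>i<N. \<Lambda>z k i)"
      by (intro sum_mono X_stage Y_stage; simp)+
    moreover have "(\<Sum>i<N. \<Lambda>y k i) = (\<Sum>i<N. \<Lambda> (Suc k) i + A (Suc k) i)"
      by (intro sum.cong dual_stage) simp_all
    ultimately show ?thesis
      using Z_stage[of k] unfolding B_def by (simp add: sum.distrib)
  qed
  have "(\<Sum>i<N. \<Lambda> K i) + (\<Sum>k\<in>{1..K}. \<Sum>i<N. A k i) + (\<Sum>k<K. B k) + (\<Sum>k<K. \<Sum>i<N. C k i)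
      \<le> (\<Sum>i<N. \<Lambda> 0 i)"
  proof (induction K)
    case (Suc K)
    then show ?case using step[of K] by simp
  qed simp
  then show ?thesis
    unfolding B_def by (simp add: sum.swap[of _ "{..<N}"])
qed

theorem lemma2:
  fixes n N M K :: nat
    and u f0 :: vec
    and blk :: "nat \<Rightarrow> nat"
    and p q s :: "nat \<Rightarrow> nat"
    and F :: "nat \<Rightarrow> vec \<Rightarrow> vec"
    and Gm Hm :: "nat \<Rightarrow> nat \<Rightarrow> nat \<Rightarrow> real"
    and G0 H0 :: "nat \<Rightarrow> vec"
    and rho :: "nat \<Rightarrow> real"
    and uY uMu :: "nat \<Rightarrow> cat \<Rightarrow> vec"
    and \<alpha> :: "nat \<Rightarrow> cat \<Rightarrow> real"
    and sig1 sig2 :: "nat \<Rightarrow> nat \<Rightarrow> nat \<Rightarrow> real"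
    and tau :: "nat \<Rightarrow> real"
    and gam :: "nat \<Rightarrow> nat \<Rightarrow> cat \<Rightarrow> real"
    and X :: "nat \<Rightarrow> nat \<Rightarrow> vec"
    and Z :: "nat \<Rightarrow> vec"
    and Y mu :: "nat \<Rightarrow> nat \<Rightarrow> cat \<Rightarrow> vec"
  defines "d \<equiv> \<lambda>i c. cdim n (p i) (q i) (s i) c"
    and "r \<equiv> \<lambda>k i c. res (F i) (affmap n (Gm i) (G0 i)) (affmap n (Hm i) (H0 i)) c (X k i) (Z k) (Y k i c)"
    and "L \<equiv> \<lambda>k. \<Sum>i<N. Lag n (p i) (q i) (s i) f0 (F i) (affmap n (Gm i) (G0 i)) (affmap n (Hm i) (H0 i)) (rho i)
                           (X k i) (Z k) (Y k i) (mu k i)"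
    and "XGS \<equiv> \<lambda>k i l. GS blk (X k i) (X (Suc k) i) l"
  assumes u_pos: "\<forall>j<n. u j > 0"
    and blk_part: "\<forall>j<n. blk j < M"
    and F_quad: "\<forall>i<N. \<forall>j<p i. quad_comp n (\<lambda>V. F i V j)"
    and F_convex: "\<forall>i<N. \<forall>j<p i. convex_on_box n u (\<lambda>V. F i V j)"
    and rho_pos: "\<forall>i<N. rho i > 0"
    and uY_pos: "\<forall>i<N. \<forall>c\<in>cats. \<forall>j<d i c. uY i c j > 0"
    and uMu_pos: "\<forall>i<N. \<forall>c\<in>cats. \<forall>j<d i c. uMu i c j > 0"
    and alpha_pos: "\<forall>i<N. \<forall>c\<in>cats. \<alpha> i c > 0"
    and sig1_nonneg: "\<forall>k. \<forall>i<N. \<forall>l<M. sig1 k i l \<ge> 0"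
    and sig2_pos: "\<forall>k. \<forall>i<N. \<forall>l<M. sig2 k i l > 0"
    and tau_pos: "\<forall>k. tau k > 0"
    and gam_pos: "\<forall>k. \<forall>i<N. \<forall>c\<in>cats. gam k i c > 0"
    and X0: "\<forall>i<N. in_box n u (X 0 i)"
    and Z0: "in_box n u (Z 0)"
    and Y0: "\<forall>i<N. \<forall>c\<in>cats. in_pbox (d i c) (uY i c) (Y 0 i c)"
    and mu0: "\<forall>i<N. \<forall>c\<in>cats. in_pbox (d i c) (uMu i c) (mu 0 i c)"
    and U1: "\<forall>k. \<forall>i<N. \<forall>l<M.
       in_block_box n u blk l (X (Suc k) i) \<and>
       (\<forall>W. in_block_box n u blk l W \<longrightarrow>
          (let obj = (\<lambda>V. Lag n (p i) (q i) (s i) f0 (F i) (affmap n (Gm i) (G0 i)) (affmap n (Hm i) (H0 i)) (rho i) V (Z k) (Y k i) (mu k i)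
                     + sig1 k i l * (\<Sum>j\<in>blk_set n blk l. \<bar>V j - X k i j\<bar>)
                     + sig2 k i l / 2 * (\<Sum>j\<in>blk_set n blk l. (V j - X k i j)\<^sup>2))
           in obj (XGS k i (Suc l))
              \<le> obj (\<lambda>j. if blk j = l then W j else XGS k i l j)))"
    and U2: "\<forall>k. in_box n u (Z (Suc k)) \<and>
       (\<forall>W. in_box n u W \<longrightarrow>
          (let obj = (\<lambda>V. \<Sum>i<N.
                 inner_d n (mu k i CpX) (res (F i) (affmap n (Gm i) (G0 i)) (affmap n (Hm i) (H0 i)) CpX (X (Suc k) i) V (Y k i CpX))
               + inner_d n (mu k i CnX) (res (F i) (affmap n (Gm i) (G0 i)) (affmap n (Hm i) (H0 i)) CnX (X (Suc k) i) V (Y k i CnX))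
               + rho i / 2 * (sqnorm n (res (F i) (affmap n (Gm i) (G0 i)) (affmap n (Hm i) (H0 i)) CpX (X (Suc k) i) V (Y k i CpX))
                              + sqnorm n (res (F i) (affmap n (Gm i) (G0 i)) (affmap n (Hm i) (H0 i)) CnX (X (Suc k) i) V (Y k i CnX)))
               + tau k / 2 * sqnorm n (vdiff V (Z k)))
           in obj (Z (Suc k)) \<le> obj W))"
    and U3: "\<forall>k. \<forall>i<N. \<forall>c\<in>cats.
       in_pbox (d i c) (uY i c) (Y (Suc k) i c) \<and>
       (\<forall>W. in_pbox (d i c) (uY i c) W \<longrightarrow>
          (let obj = (\<lambda>V.
                 inner_d (d i c) (mu k i c) (res (F i) (affmap n (Gm i) (G0 i)) (affmap n (Hm i) (H0 i)) c (X (Suc k) i) (Z (Suc k)) V)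
               + rho i / 2 * sqnorm (d i c) (res (F i) (affmap n (Gm i) (G0 i)) (affmap n (Hm i) (H0 i)) c (X (Suc k) i) (Z (Suc k)) V)
               + gam k i c / 2 * sqnorm (d i c) (vdiff V (Y k i c)))
           in obj (Y (Suc k) i c) \<le> obj W))"
    and D: "\<forall>k. \<forall>i<N. \<forall>c\<in>cats. \<forall>j<d i c.
       mu (Suc k) i c j = mu k i c j
         - alphaD (\<alpha> i c) (uMu i c j) (mu k i c j) (r (Suc k) i c j) * r (Suc k) i c j"
  shows "L 0 \<ge> L K
     + (\<Sum>i<N. \<Sum>k\<in>{1..K}. \<Sum>c\<in>cats. \<Sum>j<d i c.
          alphaD (\<alpha> i c) (uMu i c j) (mu (k - 1) i c j) (r k i c j) * \<bar>r k i c j\<bar>\<^sup>2)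
     + (\<Sum>k<K. \<Sum>i<N.
          (\<Sum>l<M. sig2 k i l * (\<Sum>j\<in>blk_set n blk l. (X (Suc k) i j - X k i j)\<^sup>2))
        + rho i * sqnorm n (vdiff (X (Suc k) i) (X k i))
        + (tau k + rho i) * sqnorm n (vdiff (Z (Suc k)) (Z k))
        + (\<Sum>c\<in>cats. (gam k i c + rho i / 2) * sqnorm (d i c) (vdiff (Y (Suc k) i c) (Y k i c)))
        + rho i / 2 * (\<Sum>l<M.
              sqnorm (p i) (vdiff (F i (XGS k i (Suc l))) (F i (XGS k i l)))
            + sqnorm (q i) (blkmap n blk l (Gm i) (vdiff (X (Suc k) i) (X k i)))
            + 2 * sqnorm (s i) (blkmap n blk l (Hm i) (vdiff (X (Suc k) i) (X k i)))))
     + (\<Sum>i<N. \<Sum>k<K. \<Sum>l<M.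
          sig1 k i l * (\<Sum>j\<in>blk_set n blk l. \<bar>X k i j - X (Suc k) i j\<bar>)
        + inner_d (p i)
            (\<lambda>t. mu k i CF t + rho i * (F i (XGS k i (Suc l)) t + Y k i CF t))
            (\<lambda>t. F i (XGS k i l) t - F i (XGS k i (Suc l)) t
                 - (\<Sum>j\<in>blk_set n blk l. (X k i j - X (Suc k) i j)
                       * partial_d (\<lambda>V. F i V t) (XGS k i (Suc l)) j)))"
proof -
  let ?Lag = "\<lambda>i. Lag n (p i) (q i) (s i) f0 (F i) (affmap n (Gm i) (G0 i)) (affmap n (Hm i) (H0 i)) (rho i)"
  note U1 = U1[unfolded XGS_def] and U3 = U3[unfolded d_def] and D = D[unfolded d_def r_def]
  have X_box: "\<forall>l<M. in_block_box n u blk l (X k i)" if "i < N" for k i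
    using X0 U1 that by (cases k) (auto intro: in_box_imp_in_block_box)
  have Z_box: "in_box n u (Z k)" for k
    using Z0 U2 by (cases k) auto
  have Y_box: "\<forall>c\<in>cats. in_pbox (cdim n (p i) (q i) (s i) c) (uY i c) (Y k i c)" if "i < N" for k i
    using Y0 U3 that unfolding d_def by (cases k) auto
  show ?thesis
    unfolding L_def XGS_def d_def r_def
  proof (rule staged_descent_telescope[where
        \<Lambda> = "\<lambda>k i. ?Lag i (X k i) (Z k) (Y k i) (mu k i)" and
        \<Lambda>x = "\<lambda>k i. ?Lag i (X (Suc k) i) (Z k) (Y k i) (mu k i)" and
        \<Lambda>z = "\<lambda>k i. ?Lag i (X (Suc k) i) (Z (Suc k)) (Y k i) (mu k i)" and
        \<Lambda>y = "\<lambda>k i. ?Lag i (X (Suc k) i) (Z (Suc k)) (Y (Suc k) i) (mu k i)"], goal_cases)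
    case (1 k i)
    then show ?case
      by (intro Lag_sweep_descent[where u = u]) (use F_quad blk_part X_box U1 in auto)
  next
    case (2 k)
    show ?case
      by (rule Lag_Z_update_descent[where u = u]) (use Z_box U2 in auto)
  next
    case (3 k i)
    then show ?case
      by (intro Lag_Y_update_descent[where uY = "uY i"]) (use Y_box U3 in auto)
  next
    case (4 k i)
    then show ?case
      unfolding diff_Suc_1 by (intro Lag_dual_update) (use D in auto)
  qed
qed

end
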